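(* Let $p$ be an odd prime and let $a,b_1,b_2,b_3,c$ be integers such that all factorials appearing on the right-hand side below are factorials of nonnegative integers less than $p$. Then in $\mathbb{F}_p$ $$\int_{[1;1;1]_p}t^a(1-t)^{b_1}(s-t)^{p-c}(1-s)^{b_2}(u-s)^{p-c}(1-u)^{b_3}\,dt\,ds\,du$$ $$=-\,\frac{a!\,(b_1+b_2+b_3-2c+2)!}{(a+b_1+b_2+b_3-2c+3-p)!}\cdot\frac{(p-c)!\,(b_2+b_3-c+1)!}{(b_2+b_3-2c+2)!}\cdot\frac{(p-c)!\,b_3!}{(b_3-c+1)!}.$$
   Context: For a polynomial $P(x_1,\dots,x_k)=\sum_d c_dx_1^{d_1}\cdots x_k^{d_k}$ with coefficients in $\mathbb{F}_p$ and $l\in\mathbb{Z}_{>0}^k$, the $\mathbb{F}_p$-integral $\int_{[l_1,\dots,l_k]_p}P\,dx$ is the coefficient $c_{l_1p-1,\dots,l_kp-1}$. Thus the left-hand side is the coefficient of $t^{p-1}s^{p-1}u^{p-1}$ in the integrand reduced mod $p$. Factorials are taken in $\mathbb{F}_p$. *)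

theory Defs
  imports "HOL-Computational_Algebra.Polynomial" "Berlekamp_Zassenhaus.Finite_Field"
begin

text \<open>Trivariate polynomials in t, s, u are represented as nested univariate
polynomials: a polynomial in u whose coefficients are polynomials in s whose
coefficients are polynomials in t.\<close>

definition var_t :: "'a::comm_ring_1 poly poly poly" where
  "var_t = [:[:[:0, 1:]:]:]"

definition var_s :: "'a::comm_ring_1 poly poly poly" where
  "var_s = [:[:0, 1:]:]"

definition var_u :: "'a::comm_ring_1 poly poly poly" where
  "var_u = [:0, 1:]"

definition coeff3 :: "'a::comm_ring_1 poly poly poly \<Rightarrow> nat \<Rightarrow> nat \<Rightarrow> nat \<Rightarrow> 'a" where
  "coeff3 P i j k = coeff (coeff (coeff P k) j) i"

text \<open>F_p-integral over [l1,l2,l3]_p in the variables (t,s,u):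
the coefficient of t^(l1 p - 1) s^(l2 p - 1) u^(l3 p - 1).\<close>
definition Fp_integral3 :: "nat \<Rightarrow> nat \<Rightarrow> nat \<Rightarrow> nat \<Rightarrow> 'a::comm_ring_1 poly poly poly \<Rightarrow> 'a" where
  "Fp_integral3 p l1 l2 l3 P = coeff3 P (l1 * p - 1) (l2 * p - 1) (l3 * p - 1)"

end

theory Submission
  imports Defs "HOL-Number_Theory.Residues"
begin

text \<open>Everything reduces to the one-variable F_p-beta integral: for \<open>e < p\<close> and
  \<open>e + b + 1 = p + m\<close>, the coefficient of \<open>X^(p-1)\<close> in \<open>(X - x)^e (1 - X)^b\<close> is
  \<open>-e! b! (1 - x)^m / m!\<close>. For \<open>m = 0\<close> this is Wilson's theorem in the form
  \<open>e! (p-1-e)! = (-1)^(e+1)\<close>; raising \<open>b\<close> by one multiplies the coefficient by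
  \<open>(b+1)(1-x)/(m+1)\<close>, because the \<open>X^(p-1)\<close>-coefficient of the derivative of
  \<open>(X - x)^(e+1) (1 - X)^(b+1)\<close> vanishes in characteristic \<open>p\<close>.
  The triple integral is evaluated from the inside out: integrating over \<open>u\<close> produces
  \<open>(1 - s)^m\<^sub>3\<close>, which joins \<open>(1 - s)^b\<^sub>2\<close> in the integral over \<open>s\<close>, and that
  in turn produces \<open>(1 - t)^m\<^sub>2\<close> for the integral over \<open>t\<close>.\<close>

lemma wilson_fact_mult_fact:
  assumes "prime p" "CHAR('a::comm_ring_1) = p" "e + f + 1 = p"
  shows "of_nat (fact e * fact f) = (-1 :: 'a) ^ Suc e"
  using assms(3)
proof (induction e arbitrary: f)
  case 0
  have "of_int (fact (p - 1)) = (of_int (-1) :: 'a)"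
    unfolding of_int_eq_iff_cong_CHAR assms(2) by (rule wilson_theorem[OF assms(1)])
  then have "of_nat (fact (p - 1)) = (-1 :: 'a)"
    by (metis of_int_of_nat_eq of_nat_fact of_int_minus of_int_1)
  moreover have "f = p - 1"
    using 0 by simp
  ultimately show ?case
    by simp
next
  case (Suc e)
  have IH: "of_nat (fact e * fact (Suc f)) = (-1 :: 'a) ^ Suc e"
    by (rule Suc.IH) (use Suc.prems in simp)
  have "of_nat p = (0 :: 'a)"
    by (simp flip: assms(2))
  moreover have "p = Suc f + Suc e"
    using Suc.prems by simp
  ultimately have "of_nat (Suc f) + of_nat (Suc e) = (0 :: 'a)"
    by (simp only: of_nat_add)
  then have Suc_f: "of_nat (Suc f) = - (of_nat (Suc e) :: 'a)"
    by (simp only: eq_neg_iff_add_eq_0)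
  have "of_nat (fact (Suc e) * fact f) = of_nat (Suc e) * (of_nat (fact e) * of_nat (fact f) :: 'a)"
    by (simp only: fact_Suc of_nat_id of_nat_mult mult.assoc)
  also have "\<dots> = - (of_nat (fact e) * (of_nat (Suc f) * of_nat (fact f)))"
    by (simp only: Suc_f mult_minus_left mult_minus_right minus_minus mult.left_commute)
  also have "\<dots> = - of_nat (fact e * fact (Suc f))"
    by (simp only: fact_Suc of_nat_id of_nat_mult)
  finally show ?case
    using IH by simp
qed

lemma neg_one_power_pred_CHAR:
  assumes "prime p" "CHAR('a::ring_1) = p"
  shows "(-1 :: 'a) ^ (p - 1) = 1"
proof -
  obtain q where q: "p = Suc q"
    using prime_gt_0_nat[OF assms(1)] gr0_implies_Suc by blast
  have "(-1 :: 'a) ^ q * (-1) = (-1) ^ p"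
    unfolding q by simp
  also have "\<dots> = -1"
    using minus_power_prime_CHAR[where x = "1 :: 'a"] assms by simp
  finally show ?thesis
    unfolding q by simp
qed

definition beta_poly :: "'a::comm_ring_1 \<Rightarrow> nat \<Rightarrow> nat \<Rightarrow> 'a poly" where
  "beta_poly x e b = [:-x, 1:] ^ e * [:1, -1:] ^ b"

lemma pderiv_beta_poly:
  fixes x :: "'a::idom"
  shows "pderiv (beta_poly x (Suc e) (Suc b))
    = smult (of_nat (Suc e)) (beta_poly x e (Suc b)) - smult (of_nat (Suc b)) (beta_poly x (Suc e) b)"
  unfolding beta_poly_def pderiv_mult pderiv_power_Suc
  by (simp add: pderiv_pCons minus_pCons one_pCons smult_diff_right mult_ac ring_distribs
      del: power_Suc)

lemma beta_poly_Suc_right: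
  "beta_poly x e (Suc b) = smult (1 - x) (beta_poly x e b) - beta_poly x (Suc e) b"
proof -
  have "beta_poly x e (Suc b) = beta_poly x e b * [:1, -1:]"
    by (simp only: beta_poly_def power_Suc2 mult.assoc)
  also have "[:1, -1:] = smult (1 - x) 1 - [:-x, 1:]"
    by simp
  finally show ?thesis
    by (simp only: right_diff_distrib mult_smult_left mult_smult_right mult.left_neutral
        beta_poly_def power_Suc mult_ac)
qed

lemma coeff_beta_poly_top:
  fixes x :: "'a::idom"
  shows "coeff (beta_poly x e b) (e + b) = (-1) ^ b"
  using coeff_mult_degree_sum[of "[:-x, 1:] ^ e" "[:1, -1:] ^ b"]
  by (simp add: beta_poly_def degree_linear_power coeff_linear_power)

lemma coeff_beta_poly_recurrence:
  fixes x :: "'a::idom"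
  assumes "of_nat (Suc n) = (0 :: 'a)"
  shows "of_nat (e + b + 2) * coeff (beta_poly x e (Suc b)) n
    = of_nat (Suc b) * (1 - x) * coeff (beta_poly x e b) n"
proof -
  define C where "C = coeff (beta_poly x e (Suc b)) n"
  define C0 where "C0 = coeff (beta_poly x e b) n"
  define D where "D = coeff (beta_poly x (Suc e) b) n"
  have "coeff (pderiv (beta_poly x (Suc e) (Suc b))) n = 0"
    unfolding coeff_pderiv assms by simp
  then have deriv: "of_nat (Suc e) * C = of_nat (Suc b) * D"
    unfolding pderiv_beta_poly C_def D_def by simp
  have split: "C = (1 - x) * C0 - D"
    unfolding C_def C0_def D_def by (subst beta_poly_Suc_right) simp
  have "of_nat (e + b + 2) * C = of_nat (Suc e) * C + of_nat (Suc b) * C"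
    by (simp add: algebra_simps)
  also have "\<dots> = of_nat (Suc b) * D + of_nat (Suc b) * ((1 - x) * C0 - D)"
    unfolding deriv by (simp only: split)
  also have "\<dots> = of_nat (Suc b) * (1 - x) * C0"
    by (simp add: algebra_simps)
  finally show ?thesis
    unfolding C_def C0_def .
qed

lemma Fp_beta_integral:
  fixes x :: "'a::idom"
  assumes p: "prime p" "CHAR('a) = p" and "e < p" "e + b + 1 = p + m"
  shows "of_nat (fact m) * coeff (beta_poly x e b) (p - 1) = - of_nat (fact e * fact b) * (1 - x) ^ m"
  using assms(4)
proof (induction m arbitrary: b)
  case 0
  then have top: "e + b = p - 1"
    by simp
  have "(-1 :: 'a) ^ e * (-1) ^ e = 1"
    by (induction e) auto
  then have "(-1 :: 'a) ^ b = (-1) ^ (e + b) * (-1) ^ e"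
    by (simp add: power_add mult.left_commute)
  also have "\<dots> = (-1) ^ e"
    unfolding top neg_one_power_pred_CHAR[OF p] by simp
  moreover have "of_nat (fact e * fact b) = (-1 :: 'a) ^ Suc e"
    using wilson_fact_mult_fact[OF p] 0 by simp
  ultimately show ?case
    using coeff_beta_poly_top[of x e b] top by simp
next
  case (Suc m)
  obtain b' where b: "b = Suc b'"
    using Suc.prems \<open>e < p\<close> by (cases b) auto
  have b': "e + b' + 1 = p + m"
    using Suc.prems b by simp
  have p0: "of_nat p = (0 :: 'a)"
    by (simp flip: p(2))
  have "e + b' + 2 = p + Suc m"
    using b' by simp
  then have Suc_m: "(of_nat (e + b' + 2) :: 'a) = of_nat (Suc m)"
    by (simp only: of_nat_add p0 add_0_left)
  have "Suc (p - 1) = p"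
    using prime_gt_0_nat[OF p(1)] by simp
  then have rec: "of_nat (Suc m) * coeff (beta_poly x e b) (p - 1)
      = of_nat (Suc b') * (1 - x) * coeff (beta_poly x e b') (p - 1)"
    unfolding b Suc_m[symmetric] by (intro coeff_beta_poly_recurrence) (simp add: p0)
  have "of_nat (fact (Suc m)) * coeff (beta_poly x e b) (p - 1)
      = of_nat (fact m) * (of_nat (Suc m) * coeff (beta_poly x e b) (p - 1))"
    by (simp add: algebra_simps)
  also have "\<dots> = of_nat (Suc b') * (1 - x) * (of_nat (fact m) * coeff (beta_poly x e b') (p - 1))"
    unfolding rec by (simp add: algebra_simps)
  also have "\<dots> = - of_nat (fact e * fact b) * (1 - x) ^ Suc m"
    unfolding Suc.IH[OF b'] b by (simp add: algebra_simps)
  finally show ?case .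
qed

lemma Fp_beta_integral_smult:
  fixes x :: "'a::idom"
  assumes "prime p" "CHAR('a) = p" "e < p" "e + b + 1 = p + m"
  shows "of_nat (fact m) * coeff (smult Q (beta_poly x e b)) (p - 1)
    = - of_nat (fact e * fact b) * (Q * (1 - x) ^ m)"
  using Fp_beta_integral[OF assms, of x] by (simp add: mult.left_commute)

lemma coeff_of_nat_mult: "coeff (of_nat n * f) k = of_nat n * coeff f k"
  by (simp add: of_nat_poly)

lemma Fp_integral3_iterated_beta:
  fixes A B1 B2 B3 e m1 m2 m3 :: nat
  assumes p: "prime p" "CHAR('a::idom) = p"
    and "A < p" "e < p"
    and m3: "e + B3 + 1 = p + m3" and m2: "e + (B2 + m3) + 1 = p + m2"
    and m1: "A + (B1 + m2) + 1 = p + m1"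
  shows "of_nat (fact m1 * fact m2 * fact m3) * Fp_integral3 p 1 1 1
      ((var_t :: 'a poly poly poly) ^ A * (1 - var_t) ^ B1 * (var_s - var_t) ^ e * (1 - var_s) ^ B2
        * (var_u - var_s) ^ e * (1 - var_u) ^ B3)
    = - of_nat (fact A * fact (B1 + m2) * fact e * fact (B2 + m3) * fact e * fact B3)"
    (is "_ * Fp_integral3 p 1 1 1 ?P = _")
proof -
  define P where "P = ?P"
  define T :: "'a poly" where "T = [:0, 1:]"
  define S :: "'a poly poly" where "S = [:0, 1:]"
  define W where "W = T ^ A * (1 - T) ^ B1"
  define Q where "Q = [:T:] ^ A * (1 - [:T:]) ^ B1 * (S - [:T:]) ^ e * (1 - S) ^ B2"
  have P_eq: "P = smult Q (beta_poly S e B3)"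
    unfolding P_def Q_def S_def T_def var_t_def var_s_def var_u_def beta_poly_def
    by (simp add: poly_const_pow mult_to_poly diff_to_poly one_pCons mult_ac)
  have Q_eq: "Q * (1 - S) ^ m3 = smult W (beta_poly T e (B2 + m3))"
    unfolding Q_def W_def S_def beta_poly_def
    by (simp add: poly_const_pow mult_to_poly diff_to_poly one_pCons mult_ac power_add)
  have W_eq: "W * (1 - T) ^ m2 = beta_poly 0 A (B1 + m2)"
    unfolding W_def T_def beta_poly_def
    by (simp add: one_pCons mult_ac power_add)
  have char: "CHAR('a poly poly) = p" "CHAR('a poly) = p"
    using p(2) by simp_all
  have "of_nat (fact m1 * fact m2 * fact m3) * Fp_integral3 p 1 1 1 P
      = of_nat (fact m1) * coeff (of_nat (fact m2) * coeff (of_nat (fact m3)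
          * coeff P (p - 1)) (p - 1)) (p - 1)"
    by (simp only: Fp_integral3_def coeff3_def coeff_of_nat_mult of_nat_mult mult.assoc mult_1)
  also have "\<dots> = of_nat (fact m1) * coeff (of_nat (fact m2) * coeff (smult
      (- of_nat (fact e * fact B3) * W) (beta_poly T e (B2 + m3))) (p - 1)) (p - 1)"
    unfolding P_eq Fp_beta_integral_smult[OF p(1) char(1) \<open>e < p\<close> m3] Q_eq
    by (simp add: of_nat_poly)
  also have "\<dots> = of_nat (fact m1)
      * coeff (of_nat (fact e * fact B3 * fact e * fact (B2 + m3)) * beta_poly 0 A (B1 + m2)) (p - 1)"
    unfolding Fp_beta_integral_smult[OF p(1) char(2) \<open>e < p\<close> m2] W_eq[symmetric]
    by (simp add: mult_ac)
  also have "\<dots> = of_nat (fact e * fact B3 * fact e * fact (B2 + m3))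
      * (of_nat (fact m1) * coeff (beta_poly 0 A (B1 + m2)) (p - 1))"
    unfolding coeff_of_nat_mult by (rule mult.left_commute)
  also have "\<dots> = - of_nat (fact A * fact (B1 + m2) * fact e * fact (B2 + m3) * fact e * fact B3)"
    unfolding Fp_beta_integral[OF p \<open>A < p\<close> m1] by (simp add: mult_ac)
  finally show ?thesis
    unfolding P_def .
qed

lemma of_nat_fact_eq_0_iff_CHAR:
  assumes "prime CHAR('a::semiring_1)"
  shows "of_nat (fact m) = (0 :: 'a) \<longleftrightarrow> CHAR('a) \<le> m"
  using assms by (simp add: of_nat_eq_0_iff_char_dvd prime_dvd_fact_iff)

lemma Fp_integral3_iterated_beta_field:
  fixes A B1 B2 B3 e m1 m2 m3 :: nat
  assumes p: "prime p" "CHAR('a::field) = p"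
    and "A < p" "e < p" "m1 < p" "m2 < p" "m3 < p"
    and "e + B3 + 1 = p + m3" "e + (B2 + m3) + 1 = p + m2" "A + (B1 + m2) + 1 = p + m1"
  shows "Fp_integral3 p 1 1 1
      ((var_t :: 'a poly poly poly) ^ A * (1 - var_t) ^ B1 * (var_s - var_t) ^ e * (1 - var_s) ^ B2
        * (var_u - var_s) ^ e * (1 - var_u) ^ B3)
    = - (of_nat (fact A) * of_nat (fact (B1 + m2)) / of_nat (fact m1))
      * (of_nat (fact e) * of_nat (fact (B2 + m3)) / of_nat (fact m2))
      * (of_nat (fact e) * of_nat (fact B3) / of_nat (fact m3))"
    (is "_ = ?R")
proof -
  have nonzero: "of_nat (fact m) \<noteq> (0 :: 'a)" if "m < p" for m
    using that p by (simp add: of_nat_fact_eq_0_iff_CHAR)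
  have "V = ?R"
    if "of_nat (fact m1 * fact m2 * fact m3) * V
      = - of_nat (fact A * fact (B1 + m2) * fact e * fact (B2 + m3) * fact e * fact B3)"
    for V :: 'a
    using that nonzero[OF \<open>m1 < p\<close>] nonzero[OF \<open>m2 < p\<close>] nonzero[OF \<open>m3 < p\<close>]
    by (simp add: field_simps)
  then show ?thesis
    using Fp_integral3_iterated_beta[OF p \<open>A < p\<close> \<open>e < p\<close> assms(8-10)] by blast
qed

theorem theorem3p8:
  fixes a b1 b2 b3 c :: int
  assumes p_odd: "odd CARD('p::prime_card)"
    and exps: "0 \<le> a" "0 \<le> b1" "0 \<le> b2" "0 \<le> b3" "c \<le> int CARD('p)"
    and facts: "\<forall>m \<in> {a, b1 + b2 + b3 - 2*c + 2, a + b1 + b2 + b3 - 2*c + 3 - int CARD('p),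
                     int CARD('p) - c, b2 + b3 - c + 1, b2 + b3 - 2*c + 2, b3, b3 - c + 1}.
                   0 \<le> m \<and> m < int CARD('p)"
  shows "Fp_integral3 CARD('p) 1 1 1
           ((var_t :: 'p mod_ring poly poly poly) ^ nat a * (1 - var_t) ^ nat b1
            * (var_s - var_t) ^ nat (int CARD('p) - c) * (1 - var_s) ^ nat b2
            * (var_u - var_s) ^ nat (int CARD('p) - c) * (1 - var_u) ^ nat b3)
         = - (of_nat (fact (nat a)) * of_nat (fact (nat (b1 + b2 + b3 - 2*c + 2)))
                / of_nat (fact (nat (a + b1 + b2 + b3 - 2*c + 3 - int CARD('p)))))
           * (of_nat (fact (nat (int CARD('p) - c))) * of_nat (fact (nat (b2 + b3 - c + 1)))
                / of_nat (fact (nat (b2 + b3 - 2*c + 2))))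
           * (of_nat (fact (nat (int CARD('p) - c))) * of_nat (fact (nat b3))
                / of_nat (fact (nat (b3 - c + 1))))"
proof -
  let ?p = "CARD('p)"
  define A B1 B2 B3 e where "A = nat a" and "B1 = nat b1" and "B2 = nat b2" and "B3 = nat b3"
    and "e = nat (int ?p - c)"
  define m1 m2 m3 where "m1 = nat (a + b1 + b2 + b3 - 2*c + 3 - int ?p)"
    and "m2 = nat (b2 + b3 - 2*c + 2)" and "m3 = nat (b3 - c + 1)"
  have lower: "0 \<le> a + b1 + b2 + b3 - 2*c + 3 - int ?p" "0 \<le> b2 + b3 - 2*c + 2" "0 \<le> b3 - c + 1"
    and upper: "a < int ?p" "int ?p - c < int ?p" "a + b1 + b2 + b3 - 2*c + 3 - int ?p < int ?p"
      "b2 + b3 - 2*c + 2 < int ?p" "b3 - c + 1 < int ?p"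
    using facts by simp_all
  have int_defs: "int A = a" "int B1 = b1" "int B2 = b2" "int B3 = b3" "int e = int ?p - c"
      "int m1 = a + b1 + b2 + b3 - 2*c + 3 - int ?p" "int m2 = b2 + b3 - 2*c + 2" "int m3 = b3 - c + 1"
    using exps lower unfolding A_def B1_def B2_def B3_def e_def m1_def m2_def m3_def by simp_all
  have bounds: "A < ?p" "e < ?p" "m1 < ?p" "m2 < ?p" "m3 < ?p"
    using upper int_defs by (simp_all flip: of_nat_less_iff)
  have exps_nat: "e + B3 + 1 = ?p + m3" "e + (B2 + m3) + 1 = ?p + m2" "A + (B1 + m2) + 1 = ?p + m1"
    using int_defs by (simp_all flip: of_nat_eq_iff)
  have nat_sums: "nat (b1 + b2 + b3 - 2*c + 2) = B1 + m2" "nat (b2 + b3 - c + 1) = B2 + m3"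
    using int_defs by (simp_all flip: int_defs)
  show ?thesis
    unfolding nat_sums A_def[symmetric] B1_def[symmetric] B2_def[symmetric] B3_def[symmetric]
      e_def[symmetric] m1_def[symmetric] m2_def[symmetric] m3_def[symmetric]
    by (rule Fp_integral3_iterated_beta_field) (use prime_card bounds exps_nat in simp_all)
qed

end
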